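(* Let $\mathcal{G}$ be a class of graphs on vertex set $[p]$, fix $\lambda>0$, and let $\mathcal{T}\subseteq\mathcal{G}$. For every $\epsilon>0$ and every $\epsilon$-covering $C_{\mathcal{T}}(\epsilon)$ of $\mathcal{T}$, every estimator $\phi$ satisfies $$p_{\max}\;\ge\;1-\frac{\log|C_{\mathcal{T}}(\epsilon)|+n\epsilon+\log 2}{\log|\mathcal{T}|}.$$
   Context: For a graph $G=([p],E)$ and $\lambda>0$, the Ising model is $f_G(\mathbf{x})=\frac{1}{Z}\exp\big(\sum_{(i,j)\in E}\lambda x_ix_j\big)$ on $\{-1,+1\}^p$. An estimator is a map $\phi:\{-1,+1\}^{np}\to\mathcal{G}$ applied to $n$ i.i.d. samples from $f_G$, giving $\hat G$; $p_{\max}=\max_{G\in\mathcal{G}}\Pr(\hat G\ne G)$. $D(f\|g)=\sum_x f(x)\log(f(x)/g(x))$ is the KL-divergence. An $\epsilon$-covering of $\mathcal{T}$ is a set $C_{\mathcal{T}}(\epsilon)\subseteq\mathcal{G}$ such that for every $G\in\mathcal{T}$ there is $G'\in C_{\mathcal{T}}(\epsilon)$ with $D(f_G\|f_{G'})\le\epsilon$. *)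

theory Defs
  imports "HOL-Analysis.Analysis"
begin

definition graphs_on :: "nat \<Rightarrow> nat set set set" where
  "graphs_on p = {E. \<forall>e\<in>E. e \<subseteq> {..<p} \<and> card e = 2}"

definition configs :: "nat \<Rightarrow> (nat \<Rightarrow> real) set" where
  "configs p = PiE {..<p} (\<lambda>_. {-1, 1})"

definition ising_weight :: "real \<Rightarrow> nat set set \<Rightarrow> (nat \<Rightarrow> real) \<Rightarrow> real" where
  "ising_weight lam G x = exp (\<Sum>e\<in>G. lam * (\<Prod>i\<in>e. x i))"

definition partition_fn :: "nat \<Rightarrow> real \<Rightarrow> nat set set \<Rightarrow> real" where
  "partition_fn p lam G = (\<Sum>x\<in>configs p. ising_weight lam G x)"

definition ising :: "nat \<Rightarrow> real \<Rightarrow> nat set set \<Rightarrow> (nat \<Rightarrow> real) \<Rightarrow> real" where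
  "ising p lam G x = ising_weight lam G x / partition_fn p lam G"

definition KL_ising :: "nat \<Rightarrow> real \<Rightarrow> nat set set \<Rightarrow> nat set set \<Rightarrow> real" where
  "KL_ising p lam G G' =
     (\<Sum>x\<in>configs p. ising p lam G x * ln (ising p lam G x / ising p lam G' x))"

definition is_covering ::
  "nat \<Rightarrow> real \<Rightarrow> nat set set set \<Rightarrow> nat set set set \<Rightarrow> real \<Rightarrow> nat set set set \<Rightarrow> bool" where
  "is_covering p lam \<G> T eps C \<longleftrightarrow>
     C \<subseteq> \<G> \<and> (\<forall>G\<in>T. \<exists>G'\<in>C. KL_ising p lam G G' \<le> eps)"

definition samples :: "nat \<Rightarrow> nat \<Rightarrow> (nat \<Rightarrow> nat \<Rightarrow> real) set" where
  "samples p n = PiE {..<n} (\<lambda>_. configs p)"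

definition err_prob ::
  "nat \<Rightarrow> real \<Rightarrow> nat \<Rightarrow> ((nat \<Rightarrow> nat \<Rightarrow> real) \<Rightarrow> nat set set) \<Rightarrow> nat set set \<Rightarrow> real" where
  "err_prob p lam n phi G =
     (\<Sum>X\<in>samples p n. (if phi X \<noteq> G then (\<Prod>k<n. ising p lam G (X k)) else 0))"

definition p_max ::
  "nat \<Rightarrow> real \<Rightarrow> nat \<Rightarrow> nat set set set \<Rightarrow> ((nat \<Rightarrow> nat \<Rightarrow> real) \<Rightarrow> nat set set) \<Rightarrow> real" where
  "p_max p lam n \<G> phi = Max ((\<lambda>G. err_prob p lam n phi G) ` \<G>)"

end

theory Submission imports Defs begin

text \<open>
  Fano's inequality via the Gibbs variational principle. Draw a graph G uniformly from T and the
  samples X from its n-fold product law. The KL divergence from each such law to the uniform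
  mixture Q of the n-fold laws of the cover C is at most ln |C| + n eps, since some cover element
  is eps-close in each coordinate. Applying
  E_P g \<le> D(P\<parallel>R) + ln E_R e^g on the joint space with R = uniform \<times> Q and
  g = ln |T| times the indicator of a correct decoding, the right-hand side is at most
  ln |C| + n eps + ln 2, while the left-hand side is ln |T| times the average success probability.
\<close>

definition kl_div :: "'a set \<Rightarrow> ('a \<Rightarrow> real) \<Rightarrow> ('a \<Rightarrow> real) \<Rightarrow> real" where
  "kl_div S P Q = (\<Sum>x\<in>S. P x * ln (P x / Q x))"

definition iid_pmf :: "nat \<Rightarrow> ('a \<Rightarrow> real) \<Rightarrow> (nat \<Rightarrow> 'a) \<Rightarrow> real" where
  "iid_pmf n f X = (\<Prod>k<n. f (X k))"

definition mixture :: "'c set \<Rightarrow> ('c \<Rightarrow> 'a \<Rightarrow> real) \<Rightarrow> 'a \<Rightarrow> real" where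
  "mixture C P x = (\<Sum>c\<in>C. P c x) / card C"

lemma gibbs_variational_ineq:
  fixes P R g :: "'a \<Rightarrow> real"
  assumes I: "finite I" and P: "\<And>i. i \<in> I \<Longrightarrow> P i > 0" and R: "\<And>i. i \<in> I \<Longrightarrow> R i > 0"
    and s: "sum P I = 1"
  shows "(\<Sum>i\<in>I. P i * g i) - kl_div I P R \<le> ln (\<Sum>i\<in>I. R i * exp (g i))"
proof -
  define Z where "Z = (\<Sum>i\<in>I. R i * exp (g i))"
  have "I \<noteq> {}" using s by auto
  then have Z: "Z > 0" unfolding Z_def using I R by (intro sum_pos) auto
  \<comment> \<open>pointwise ln t \<le> t - 1 with t = R i e^(g i) / (P i Z); the right-hand sides sum to 0\<close>
  have pt: "P i * (g i - ln (P i / R i) - ln Z) \<le> R i * exp (g i) / Z - P i" if i: "i \<in> I" for i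
  proof -
    have "g i - ln (P i / R i) - ln Z = ln (R i * exp (g i) / (P i * Z))"
      using P[OF i] R[OF i] Z by (simp add: ln_div ln_mult)
    also have "\<dots> \<le> R i * exp (g i) / (P i * Z) - 1"
      using P[OF i] R[OF i] Z by (intro ln_le_minus_one) auto
    finally have "P i * (g i - ln (P i / R i) - ln Z) \<le> P i * (R i * exp (g i) / (P i * Z) - 1)"
      using P[OF i] by (intro mult_left_mono) auto
    also have "\<dots> = R i * exp (g i) / Z - P i" using P[OF i] by (simp add: field_simps)
    finally show ?thesis .
  qed
  have "(\<Sum>i\<in>I. P i * (g i - ln (P i / R i) - ln Z)) \<le> (\<Sum>i\<in>I. R i * exp (g i) / Z - P i)"
    by (rule sum_mono) (rule pt)
  also have "\<dots> = 0" using Z s by (simp add: sum_subtractf sum_divide_distrib[symmetric] Z_def)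
  moreover have "(\<Sum>i\<in>I. P i * (g i - ln (P i / R i) - ln Z))
      = (\<Sum>i\<in>I. P i * g i) - kl_div I P R - ln Z"
    using s by (simp add: kl_div_def right_diff_distrib sum_subtractf flip: sum_distrib_right)
  ultimately show ?thesis by (simp add: Z_def)
qed

lemma sum_iid_pmf_coordinate:
  assumes A: "finite A" and f: "sum f A = 1" and j: "j < n"
  shows "(\<Sum>X\<in>PiE {..<n} (\<lambda>_. A). iid_pmf n f X * h (X j)) = (\<Sum>x\<in>A. f x * h x)"
proof -
  have "iid_pmf n f X * h (X j) = (\<Prod>k<n. if k = j then f (X k) * h (X k) else f (X k))" for X
    using j by (simp add: iid_pmf_def prod.If_cases Int_absorb1 prod.remove[of "{..<n}" j] Diff_eq mult_ac)
  then have "(\<Sum>X\<in>PiE {..<n} (\<lambda>_. A). iid_pmf n f X * h (X j))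
      = (\<Prod>k<n. \<Sum>x\<in>A. if k = j then f x * h x else f x)"
    using A by (simp add: prod_sum_PiE)
  also have "\<dots> = (\<Prod>k<n. if k = j then (\<Sum>x\<in>A. f x * h x) else 1)"
    using f by (intro prod.cong) auto
  also have "\<dots> = (\<Sum>x\<in>A. f x * h x)"
    using j by simp
  finally show ?thesis .
qed

lemma sum_iid_pmf:
  assumes "finite A" and "sum f A = 1"
  shows "sum (iid_pmf n f) (PiE {..<n} (\<lambda>_. A)) = 1"
proof -
  have "(\<Prod>k<n. sum f A) = sum (iid_pmf n f) (PiE {..<n} (\<lambda>_. A))"
    unfolding iid_pmf_def using prod_sum_PiE[of "{..<n}" "\<lambda>_. A" "\<lambda>_. f"] assms(1) by simp
  then show ?thesis using assms(2) by simp
qed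

lemma kl_div_iid_pmf:
  assumes A: "finite A" and f: "\<And>x. x \<in> A \<Longrightarrow> f x > 0" and g: "\<And>x. x \<in> A \<Longrightarrow> g x > 0"
    and s: "sum f A = 1"
  shows "kl_div (PiE {..<n} (\<lambda>_. A)) (iid_pmf n f) (iid_pmf n g) = n * kl_div A f g"
proof -
  let ?h = "\<lambda>x. ln (f x / g x)"
  have ln_ratio: "ln (iid_pmf n f X / iid_pmf n g X) = (\<Sum>j<n. ?h (X j))"
    if "X \<in> PiE {..<n} (\<lambda>_. A)" for X
  proof -
    have "f (X k) \<noteq> 0" "g (X k) \<noteq> 0" if "k < n" for k
      using \<open>X \<in> PiE {..<n} (\<lambda>_. A)\<close> that f g by (auto simp: PiE_iff dual_order.strict_implies_not_eq)
    then show ?thesis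
      unfolding iid_pmf_def prod_dividef[symmetric] by (intro ln_prod) auto
  qed
  have "kl_div (PiE {..<n} (\<lambda>_. A)) (iid_pmf n f) (iid_pmf n g)
      = (\<Sum>j<n. \<Sum>X\<in>PiE {..<n} (\<lambda>_. A). iid_pmf n f X * ?h (X j))"
    unfolding kl_div_def by (simp add: ln_ratio sum_distrib_left sum.swap[of _ "{..<n}"] cong: sum.cong)
  also have "\<dots> = (\<Sum>j<n. kl_div A f g)"
    using A s sum_iid_pmf_coordinate[where h = ?h] by (intro sum.cong refl) (simp add: kl_div_def)
  finally show ?thesis by simp
qed

lemma mixture_pos:
  assumes "finite C" "C \<noteq> {}" "\<And>c. c \<in> C \<Longrightarrow> Q c x > 0"
  shows "mixture C Q x > 0"
  using assms by (auto simp: mixture_def card_gt_0_iff intro!: sum_pos divide_pos_pos)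

lemma kl_div_mixture_le:
  assumes C: "finite C" "c \<in> C" and S: "finite S"
    and P: "\<And>x. x \<in> S \<Longrightarrow> P x > 0" and s: "sum P S = 1"
    and Q: "\<And>c x. c \<in> C \<Longrightarrow> x \<in> S \<Longrightarrow> Q c x > 0"
  shows "kl_div S P (mixture C Q) \<le> ln (card C) + kl_div S P (Q c)"
proof -
  have card: "real (card C) \<ge> 1" using C by (simp add: Suc_le_eq card_gt_0_iff) blast
  have pt: "P x * ln (P x / mixture C Q x) \<le> P x * ln (card C) + P x * ln (P x / Q c x)"
    if x: "x \<in> S" for x
  proof -
    have "Q c x \<le> (\<Sum>c'\<in>C. Q c' x)"
      using C Q x by (intro member_le_sum) (auto intro: less_imp_le)
    then have "Q c x / card C \<le> mixture C Q x"
      unfolding mixture_def by (simp add: divide_right_mono)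
    moreover have "mixture C Q x > 0"
      using C Q x by (intro mixture_pos) auto
    ultimately have "P x / mixture C Q x \<le> P x / (Q c x / card C)"
      using P[OF x] Q[OF C(2) x] card by (intro divide_left_mono) auto
    then have "ln (P x / mixture C Q x) \<le> ln (P x / (Q c x / card C))"
      using P[OF x] Q[OF C(2) x] card \<open>mixture C Q x > 0\<close> by (subst ln_le_cancel_iff) auto
    also have "\<dots> = ln (card C) + ln (P x / Q c x)"
      using P[OF x] Q[OF C(2) x] card by (simp add: ln_div ln_mult)
    finally show ?thesis using P[OF x] by (simp add: distrib_left[symmetric])
  qed
  have "kl_div S P (mixture C Q) \<le> (\<Sum>x\<in>S. P x * ln (card C) + P x * ln (P x / Q c x))"
    unfolding kl_div_def by (rule sum_mono) (rule pt)
  also have "\<dots> = ln (card C) + kl_div S P (Q c)"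
    using s by (simp add: kl_div_def sum.distrib sum_distrib_right[symmetric])
  finally show ?thesis .
qed

lemma sum_mixture:
  assumes "finite S" "finite C" "C \<noteq> {}" "\<And>c. c \<in> C \<Longrightarrow> sum (Q c) S = 1"
  shows "sum (mixture C Q) S = 1"
  unfolding mixture_def sum_divide_distrib[symmetric]
  by (subst sum.swap) (simp add: assms card_gt_0_iff)

lemma sum_exp_indicator_le:
  assumes "finite T" "card T \<ge> 1"
  shows "(\<Sum>G\<in>T. exp (if x = G then ln (card T) else 0)) \<le> 2 * real (card T)"
proof -
  have "(\<Sum>G\<in>T. exp (if x = G then ln (card T) else 0))
      = (\<Sum>G\<in>T. 1 + (if x = G then real (card T) - 1 else 0))"
    using assms(2) by (intro sum.cong) auto
  also have "\<dots> \<le> 2 * real (card T)" using assms by (simp add: sum.distrib)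
  finally show ?thesis .
qed

lemma fano_average_success:
  fixes P :: "'g \<Rightarrow> 'x \<Rightarrow> real" and d :: "'x \<Rightarrow> 'g"
  assumes T: "finite T" "card T \<ge> 2" and S: "finite S"
    and P: "\<And>G X. G \<in> T \<Longrightarrow> X \<in> S \<Longrightarrow> P G X > 0"
    and sP: "\<And>G. G \<in> T \<Longrightarrow> sum (P G) S = 1"
    and Q: "\<And>X. X \<in> S \<Longrightarrow> Q X > 0" and sQ: "sum Q S = 1"
    and KL: "\<And>G. G \<in> T \<Longrightarrow> kl_div S (P G) Q \<le> B"
  shows "(\<Sum>G\<in>T. \<Sum>X\<in>S. if d X = G then P G X else 0) / card T \<le> (B + ln 2) / ln (card T)"
proof -
  let ?succ = "\<Sum>G\<in>T. \<Sum>X\<in>S. if d X = G then P G X else 0"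
  define m where "m = real (card T)"
  have m: "m \<ge> 2" using T by (simp add: m_def)
  define J where "J = (\<lambda>(G, X). P G X / m)"
  define R where "R = (\<lambda>(G :: 'g, X). Q X / m)"
  define g where "g = (\<lambda>(G, X). if d X = G then ln m else 0)"
  have sJ: "sum J (T \<times> S) = 1"
    using m sP by (simp add: J_def sum.cartesian_product' sum_divide_distrib[symmetric] m_def)
  have gibbs: "(\<Sum>i\<in>T \<times> S. J i * g i) - kl_div (T \<times> S) J R
      \<le> ln (\<Sum>i\<in>T \<times> S. R i * exp (g i))"
    using T S P Q m sJ by (intro gibbs_variational_ineq) (auto simp: J_def R_def)
  have gain: "(\<Sum>i\<in>T \<times> S. J i * g i) = ln m * (?succ / m)"
    by (auto simp: J_def g_def sum.cartesian_product' sum_distrib_left sum_divide_distrib intro!: sum.cong)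
  have "kl_div (T \<times> S) J R = (\<Sum>G\<in>T. kl_div S (P G) Q / m)"
    using m by (simp add: kl_div_def J_def R_def sum.cartesian_product' sum_divide_distrib)
  also have "\<dots> \<le> (\<Sum>G\<in>T. B / m)"
    using m KL by (intro sum_mono divide_right_mono) auto
  also have "\<dots> = B" using m by (simp add: m_def)
  finally have kl: "kl_div (T \<times> S) J R \<le> B" .
  have fibre: "(\<Sum>G\<in>T. exp (if d X = G then ln m else 0)) \<le> 2 * m" for X
    unfolding m_def using T by (intro sum_exp_indicator_le) auto
  have "(\<Sum>i\<in>T \<times> S. R i * exp (g i))
      = (\<Sum>X\<in>S. Q X / m * (\<Sum>G\<in>T. exp (if d X = G then ln m else 0)))"
    by (simp add: R_def g_def sum.cartesian_product' sum_distrib_left) (rule sum.swap)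
  also have "\<dots> \<le> (\<Sum>X\<in>S. Q X / m * (2 * m))"
    using m Q fibre by (intro sum_mono mult_left_mono) (auto intro: less_imp_le)
  also have "\<dots> = 2" using m sQ by (simp add: sum_distrib_right[symmetric])
  finally have "(\<Sum>i\<in>T \<times> S. R i * exp (g i)) \<le> 2" .
  moreover have "(\<Sum>i\<in>T \<times> S. R i * exp (g i)) > 0"
    using T S Q m sQ by (intro sum_pos) (auto simp: R_def)
  ultimately have "ln (\<Sum>i\<in>T \<times> S. R i * exp (g i)) \<le> ln 2" by simp
  then have "ln m * (?succ / m) \<le> B + ln 2"
    using gibbs gain kl by linarith
  then show ?thesis using m by (simp add: m_def field_simps)
qed

lemma configs_finite: "finite (configs p)"
  unfolding configs_def by (intro finite_PiE) auto

lemma samples_eq_PiE: "samples p n = PiE {..<n} (\<lambda>_. configs p)"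
  by (simp add: samples_def)

lemma samples_finite: "finite (samples p n)"
  unfolding samples_def by (intro finite_PiE) (auto simp: configs_finite)

lemma partition_fn_pos: "partition_fn p lam G > 0"
proof -
  have "configs p \<noteq> {}" by (simp add: configs_def PiE_eq_empty_iff)
  then show ?thesis
    unfolding partition_fn_def ising_weight_def using configs_finite by (intro sum_pos) auto
qed

lemma ising_pos: "ising p lam G x > 0"
  using partition_fn_pos[of p lam G] by (simp add: ising_def ising_weight_def)

lemma sum_ising: "(\<Sum>x\<in>configs p. ising p lam G x) = 1"
  using partition_fn_pos[of p lam G]
  by (simp add: ising_def sum_divide_distrib[symmetric] partition_fn_def)

lemma iid_ising_pos: "iid_pmf n (ising p lam G) X > 0"
  by (simp add: iid_pmf_def ising_pos prod_pos)

lemma sum_iid_ising: "sum (iid_pmf n (ising p lam G)) (samples p n) = 1"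
  by (simp add: samples_eq_PiE sum_iid_pmf configs_finite sum_ising)

lemma kl_div_iid_ising:
  "kl_div (samples p n) (iid_pmf n (ising p lam G)) (iid_pmf n (ising p lam G'))
     = n * KL_ising p lam G G'"
proof -
  have "KL_ising p lam G G' = kl_div (configs p) (ising p lam G) (ising p lam G')"
    by (simp add: KL_ising_def kl_div_def)
  then show ?thesis
    by (simp add: samples_eq_PiE kl_div_iid_pmf configs_finite ising_pos sum_ising)
qed

lemma kl_div_iid_ising_cover_mixture_le:
  assumes "is_covering p lam \<G> T eps C" "finite C" "G \<in> T"
  shows "kl_div (samples p n) (iid_pmf n (ising p lam G)) (mixture C (\<lambda>G'. iid_pmf n (ising p lam G')))
           \<le> ln (card C) + n * eps"
proof -
  obtain G' where G': "G' \<in> C" "KL_ising p lam G G' \<le> eps"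
    using assms(1,3) by (auto simp: is_covering_def)
  have "kl_div (samples p n) (iid_pmf n (ising p lam G)) (mixture C (\<lambda>G'. iid_pmf n (ising p lam G')))
      \<le> ln (card C) + kl_div (samples p n) (iid_pmf n (ising p lam G)) (iid_pmf n (ising p lam G'))"
    using assms(2) G'(1) by (intro kl_div_mixture_le)
      (auto simp: samples_finite iid_ising_pos sum_iid_ising)
  also have "\<dots> \<le> ln (card C) + n * eps"
    using G'(2) by (simp add: kl_div_iid_ising mult_left_mono)
  finally show ?thesis .
qed

lemma err_prob_eq:
  "err_prob p lam n phi G
     = 1 - (\<Sum>X\<in>samples p n. if phi X = G then iid_pmf n (ising p lam G) X else 0)"
proof -
  have "err_prob p lam n phi G
      = (\<Sum>X\<in>samples p n. iid_pmf n (ising p lam G) X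
           - (if phi X = G then iid_pmf n (ising p lam G) X else 0))"
    unfolding err_prob_def iid_pmf_def by (intro sum.cong) auto
  then show ?thesis by (simp add: sum_subtractf sum_iid_ising)
qed

lemma p_max_ge_average_err_prob:
  assumes "finite \<G>" "T \<subseteq> \<G>" "T \<noteq> {}"
  shows "(\<Sum>G\<in>T. err_prob p lam n phi G) / card T \<le> p_max p lam n \<G> phi"
proof -
  have "(\<Sum>G\<in>T. err_prob p lam n phi G) \<le> (\<Sum>G\<in>T. p_max p lam n \<G> phi)"
    unfolding p_max_def using assms by (intro sum_mono Max_ge) auto
  then show ?thesis using assms by (simp add: field_simps card_gt_0_iff finite_subset)
qed

lemma finite_graphs_on: "finite (graphs_on p)"
  by (rule finite_subset[of _ "Pow (Pow {..<p})"]) (auto simp: graphs_on_def)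

theorem corollary2:
  fixes p n :: nat and lam eps :: real
    and \<G> T C :: "nat set set set"
    and phi :: "(nat \<Rightarrow> nat \<Rightarrow> real) \<Rightarrow> nat set set"
  assumes "\<G> \<subseteq> graphs_on p"
    and "lam > 0"
    and "T \<subseteq> \<G>"
    and "card T \<ge> 2"
    and "eps > 0"
    and "is_covering p lam \<G> T eps C"
    and "\<forall>X\<in>samples p n. phi X \<in> \<G>"
  shows "p_max p lam n \<G> phi \<ge>
           1 - (ln (card C) + n * eps + ln 2) / ln (card T)"
proof -
  let ?P = "\<lambda>G. iid_pmf n (ising p lam G)"
  let ?succ = "\<Sum>G\<in>T. \<Sum>X\<in>samples p n. if phi X = G then ?P G X else 0"
  have G_fin: "finite \<G>" using assms(1) finite_graphs_on finite_subset by blast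
  have T_fin: "finite T" and T_ne: "T \<noteq> {}" using assms(4) by (auto intro: card_ge_0_finite)
  have C_fin: "finite C" and C_ne: "C \<noteq> {}"
    using assms(6) G_fin T_ne by (auto simp: is_covering_def intro: finite_subset)
  have "?succ / card T \<le> (ln (card C) + n * eps + ln 2) / ln (card T)"
    using assms(4,6) T_fin C_fin C_ne
    by (intro fano_average_success[where Q = "mixture C ?P"] mixture_pos sum_mixture
        kl_div_iid_ising_cover_mixture_le) (auto simp: samples_finite iid_ising_pos sum_iid_ising)
  moreover have "(\<Sum>G\<in>T. err_prob p lam n phi G) / card T = 1 - ?succ / card T"
    using T_fin T_ne by (simp add: err_prob_eq sum_subtractf field_simps)
  ultimately show ?thesis
    using p_max_ge_average_err_prob[OF G_fin assms(3) T_ne, of p lam n phi] by linarith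
qed

end
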